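(* A downward-closed set system $\mathcal{S}=(E,\mathcal{I})$ is not a matroid if and only if there exist $I,J\in\mathcal{I}$ with the following three properties: (1) for every $K\in\mathcal{I}|_{I\cup J}$ with $|K|\ge|I|$ we have $K\supseteq I\setminus J$; (2) $|J\setminus I|\ge 1$; (3) $I$ is a maximum-cardinality element of $\mathcal{I}|_{I\cup J}$.
   Context: A set system $(E,\mathcal{I})$ consists of a finite set $E$ and $\mathcal{I}\subseteq 2^E$ with $\emptyset\in\mathcal{I}$. It is downward-closed if $B\in\mathcal{I}$ and $A\subseteq B$ imply $A\in\mathcal{I}$. It is a matroid if it is downward-closed and satisfies the exchange axiom: if $A,B\in\mathcal{I}$ and $|A|>|B|$ then there exists $x\in A\setminus B$ with $B\cup\{x\}\in\mathcal{I}$. For $S\subseteq E$, $\mathcal{I}|_S=\mathcal{I}\cap 2^S$. *)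

theory Defs
  imports Main
begin

definition set_system :: "'a set \<Rightarrow> 'a set set \<Rightarrow> bool" where
  "set_system E \<I> \<longleftrightarrow> finite E \<and> \<I> \<subseteq> Pow E \<and> {} \<in> \<I>"

definition downward_closed :: "'a set set \<Rightarrow> bool" where
  "downward_closed \<I> \<longleftrightarrow> (\<forall>B A. B \<in> \<I> \<and> A \<subseteq> B \<longrightarrow> A \<in> \<I>)"

definition is_matroid :: "'a set \<Rightarrow> 'a set set \<Rightarrow> bool" where
  "is_matroid E \<I> \<longleftrightarrow> downward_closed \<I> \<and>
     (\<forall>A B. A \<in> \<I> \<and> B \<in> \<I> \<and> card A > card B \<longrightarrow> (\<exists>x \<in> A - B. insert x B \<in> \<I>))"

definition restrict_sys :: "'a set set \<Rightarrow> 'a set \<Rightarrow> 'a set set" where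
  "restrict_sys \<I> S = \<I> \<inter> Pow S"

end

theory Submission
  imports Defs
begin

text \<open>If the system is not a matroid, some \<open>A, B\<close> with \<open>|A| > |B|\<close> violate the exchange
  axiom. Among the maximum-cardinality independent subsets of \<open>A \<union> B\<close> take \<open>I\<close> with
  \<open>|I - B|\<close> minimal; then \<open>I\<close> and \<open>J = B\<close> satisfy (1)--(3). Conversely, in a matroid \<open>J\<close>
  can be augmented inside \<open>I \<union> J\<close> to an independent set of size at least \<open>|I|\<close>; by (1)
  it contains \<open>I - J\<close>, hence equals \<open>I \<union> J\<close>, which is larger than \<open>I\<close> by (2),
  contradicting (3).\<close>

definition max_card_member :: "'a set set \<Rightarrow> 'a set \<Rightarrow> bool" where
  "max_card_member \<F> I \<longleftrightarrow> I \<in> \<F> \<and> (\<forall>K \<in> \<F>. card K \<le> card I)"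

lemma restrict_sys_mono: "S \<subseteq> T \<Longrightarrow> restrict_sys \<I> S \<subseteq> restrict_sys \<I> T"
  by (auto simp: restrict_sys_def)

lemma card_restrict_sys_le:
  assumes "finite U" and "Y \<in> restrict_sys \<I> U"
  shows "card Y \<le> card U"
  using assms by (auto simp: restrict_sys_def intro: card_mono)

lemma ex_max_card_member_restrict:
  assumes "finite U" and "X \<in> restrict_sys \<I> U"
  obtains M where "max_card_member (restrict_sys \<I> U) M"
proof -
  have "card Y < Suc (card U)" if "Y \<in> restrict_sys \<I> U" for Y
    using card_restrict_sys_le[OF assms(1) that] by simp
  then obtain M where "M \<in> restrict_sys \<I> U" "\<forall>Y. Y \<in> restrict_sys \<I> U \<longrightarrow> card Y \<le> card M"
    using ex_has_greatest_nat[of "\<lambda>Y. Y \<in> restrict_sys \<I> U" X card] assms(2) by blast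
  then show thesis by (intro that) (auto simp: max_card_member_def)
qed

lemma max_card_member_restrict_antimono:
  assumes "max_card_member (restrict_sys \<I> U) I" and "I \<subseteq> S" and "S \<subseteq> U"
  shows "max_card_member (restrict_sys \<I> S) I"
  using assms restrict_sys_mono[OF \<open>S \<subseteq> U\<close>]
  by (auto simp: max_card_member_def restrict_sys_def)

lemma exchange_violation_witness:
  assumes dc: "downward_closed \<I>" and fin: "finite (A \<union> B)"
    and A: "A \<in> \<I>" and B: "B \<in> \<I>" and AB: "card B < card A"
    and viol: "\<forall>x \<in> A - B. insert x B \<notin> \<I>"
  obtains I where "I \<in> \<I>"
    and "\<forall>K \<in> restrict_sys \<I> (I \<union> B). card K \<ge> card I \<longrightarrow> I - B \<subseteq> K"
    and "card (B - I) \<ge> 1"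
    and "max_card_member (restrict_sys \<I> (I \<union> B)) I"
proof -
  define U where "U = A \<union> B"
  obtain M where M: "max_card_member (restrict_sys \<I> U) M"
    using ex_max_card_member_restrict[of U A \<I>] fin A by (auto simp: U_def restrict_sys_def)
  obtain I where I_max: "max_card_member (restrict_sys \<I> U) I"
    and I_min: "\<And>Y. max_card_member (restrict_sys \<I> U) Y \<Longrightarrow> card (I - B) \<le> card (Y - B)"
    using ex_has_least_nat[of "max_card_member (restrict_sys \<I> U)" M "\<lambda>X. card (X - B)"] M
    by blast
  then have I: "I \<in> \<I>" "I \<subseteq> U"
    by (auto simp: max_card_member_def restrict_sys_def)
  have "I \<union> B \<subseteq> U" using I by (auto simp: U_def)
  show thesis
  proof
    show "I \<in> \<I>" by (fact I(1))
    show "max_card_member (restrict_sys \<I> (I \<union> B)) I"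
      using max_card_member_restrict_antimono[OF I_max _ \<open>I \<union> B \<subseteq> U\<close>] by simp
    show "\<forall>K \<in> restrict_sys \<I> (I \<union> B). card K \<ge> card I \<longrightarrow> I - B \<subseteq> K"
    proof (intro ballI impI)
      fix K assume K: "K \<in> restrict_sys \<I> (I \<union> B)" "card K \<ge> card I"
      with \<open>I \<union> B \<subseteq> U\<close> I_max have "max_card_member (restrict_sys \<I> U) K"
        using restrict_sys_mono[of "I \<union> B" U \<I>]
        by (fastforce simp: max_card_member_def)
      then have "card (I - B) \<le> card (K - B)" by (rule I_min)
      moreover have "K - B \<subseteq> I - B" using K by (auto simp: restrict_sys_def)
      moreover have "finite (I - B)" using I fin by (auto simp: U_def intro: finite_subset)
      ultimately have "K - B = I - B" using card_seteq by blast
      then show "I - B \<subseteq> K" by blast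
    qed
    show "card (B - I) \<ge> 1"
    proof (rule ccontr)
      assume "\<not> card (B - I) \<ge> 1"
      moreover have "finite (B - I)" using fin by auto
      ultimately have "B - I = {}" by (simp add: Suc_le_eq card_gt_0_iff)
      then have "B \<subseteq> I" by blast
      have "card A \<le> card I"
        using I_max A by (auto simp: max_card_member_def restrict_sys_def U_def)
      with AB have "B \<noteq> I" by auto
      with \<open>B \<subseteq> I\<close> obtain x where "x \<in> I" "x \<notin> B" by blast
      then have "insert x B \<in> \<I>"
        using dc I(1) \<open>B \<subseteq> I\<close> by (auto simp: downward_closed_def)
      moreover have "x \<in> A - B" using \<open>x \<in> I\<close> \<open>x \<notin> B\<close> I(2) by (auto simp: U_def)
      ultimately show False using viol by blast
    qed
  qed
qed

lemma matroid_augment: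
  assumes "is_matroid E \<I>" and "I \<in> \<I>" and "J \<in> \<I>" and "finite (I \<union> J)"
  obtains K where "K \<in> \<I>" and "J \<subseteq> K" and "K \<subseteq> I \<union> J" and "card I \<le> card K"
proof -
  define P where "P K \<longleftrightarrow> K \<in> \<I> \<and> J \<subseteq> K \<and> K \<subseteq> I \<union> J" for K
  have "card K < Suc (card (I \<union> J))" if "P K" for K
    using card_restrict_sys_le[OF assms(4), of K \<I>] that
    by (simp add: P_def restrict_sys_def)
  moreover have "P J" using assms(3) by (simp add: P_def)
  ultimately obtain K where "P K" and K_max: "\<forall>Y. P Y \<longrightarrow> card Y \<le> card K"
    using ex_has_greatest_nat[of P J card] by blast
  then have K: "K \<in> \<I>" "J \<subseteq> K" "K \<subseteq> I \<union> J" by (auto simp: P_def)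
  have "card I \<le> card K"
  proof (rule ccontr)
    assume "\<not> card I \<le> card K"
    then obtain x where x: "x \<in> I - K" "insert x K \<in> \<I>"
      using assms(1,2) K(1) by (force simp: is_matroid_def)
    with K have "P (insert x K)" by (auto simp: P_def)
    then have "card (insert x K) \<le> card K" using K_max by blast
    moreover have "finite K" using K(3) assms(4) by (rule finite_subset)
    ultimately show False using x(1) by simp
  qed
  with K show thesis using that by blast
qed

lemma matroid_no_witness:
  assumes "is_matroid E \<I>" and I: "I \<in> \<I>" and J: "J \<in> \<I>" and fin: "finite (I \<union> J)"
    and contains: "\<forall>K \<in> restrict_sys \<I> (I \<union> J). card K \<ge> card I \<longrightarrow> I - J \<subseteq> K"
    and new: "card (J - I) \<ge> 1"
    and max: "max_card_member (restrict_sys \<I> (I \<union> J)) I"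
  shows False
proof -
  obtain K where K: "K \<in> \<I>" "J \<subseteq> K" "K \<subseteq> I \<union> J" "card I \<le> card K"
    using matroid_augment[OF assms(1) I J fin] .
  with contains have "K = I \<union> J" by (auto simp: restrict_sys_def)
  with max K(1) have "card (I \<union> J) \<le> card I"
    by (auto simp: max_card_member_def restrict_sys_def)
  moreover have "J - I \<noteq> {}" using new by (metis card.empty not_one_le_zero)
  then have "card I < card (I \<union> J)" using fin by (intro psubset_card_mono) auto
  ultimately show False by simp
qed

theorem mainTheorem3:
  fixes E :: "'a set" and \<I> :: "'a set set"
  assumes "set_system E \<I>" and "downward_closed \<I>"
  shows "\<not> is_matroid E \<I> \<longleftrightarrow>
    (\<exists>I \<in> \<I>. \<exists>J \<in> \<I>.
       (\<forall>K \<in> restrict_sys \<I> (I \<union> J). card K \<ge> card I \<longrightarrow> I - J \<subseteq> K) \<and>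
       card (J - I) \<ge> 1 \<and>
       I \<in> restrict_sys \<I> (I \<union> J) \<and>
       (\<forall>K \<in> restrict_sys \<I> (I \<union> J). card K \<le> card I))"
  (is "_ \<longleftrightarrow> (\<exists>I \<in> \<I>. \<exists>J \<in> \<I>. ?C1 I J \<and> ?C2 I J \<and> ?C3 I J)")
proof -
  have fin: "finite X" if "X \<in> \<I>" for X
    using that assms(1) by (auto simp: set_system_def intro: finite_subset)
  show ?thesis
  proof
    assume "\<not> is_matroid E \<I>"
    then obtain A B where A: "A \<in> \<I>" and B: "B \<in> \<I>" and AB: "card B < card A"
      and viol: "\<forall>x \<in> A - B. insert x B \<notin> \<I>"
      using assms(2) by (auto simp: is_matroid_def)
    have "finite (A \<union> B)" using fin[OF A] fin[OF B] by simp
    then obtain I where "I \<in> \<I>" "?C1 I B" "?C2 I B"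
      and "max_card_member (restrict_sys \<I> (I \<union> B)) I"
      by (rule exchange_violation_witness[OF assms(2) _ A B AB viol])
    with B show "\<exists>I \<in> \<I>. \<exists>J \<in> \<I>. ?C1 I J \<and> ?C2 I J \<and> ?C3 I J"
      unfolding max_card_member_def by blast
  next
    assume "\<exists>I \<in> \<I>. \<exists>J \<in> \<I>. ?C1 I J \<and> ?C2 I J \<and> ?C3 I J"
    then obtain I J where "I \<in> \<I>" "J \<in> \<I>" "?C1 I J" "?C2 I J" "?C3 I J" by blast
    then show "\<not> is_matroid E \<I>"
      using matroid_no_witness[of E \<I> I J] fin by (auto simp: max_card_member_def)
  qed
qed

end
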